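(* Let $\Lambda=\{x_k\}$ be a homogeneous Poisson point process on $\mathbb{R}^2$ with intensity $\lambda\rho_f>0$, with i.i.d. positive marks $\Psi_{0k}$ distributed as a random variable $\Psi_I$ with $\mathbb{E}[\Psi_I^{\delta}]<\infty$, independent of $\Lambda$, and let $\Psi_0>0$ be a random variable independent of $\Lambda$ and the marks. Let $\alpha>2$, $\delta=2/\alpha$, $\beta>0$, $R_f>0$, $P>0$, $\Gamma>0$, and define $$\mathrm{SIR}=\frac{\Psi_0 R_f^{-\beta}}{\sum_{k}P^2\Psi_{0k}|x_k|^{-\alpha}}.$$ Then $$\Pr(\mathrm{SIR}\le\Gamma)\ \ge\ 1-\mathbb{E}_{\Psi_0}\!\left[\exp\!\big(-\rho_f\kappa\,\Gamma^{\delta}\Psi_0^{-\delta}\big)\right],\qquad \kappa=\pi\lambda\,\mathbb{E}[\Psi_I^{\delta}]\,\big(P^2R_f^{\beta}\big)^{\delta}.$$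
   Context: Model interpretation: femtocell base stations form a Poisson point process of intensity $\lambda$; each accesses a given subchannel independently with probability $\rho_f$ (so interferers on a subchannel form a Poisson process of intensity $\lambda\rho_f$). $\Psi_0$ is the composite fading/shadowing gain to the desired user at the femtocell edge distance $R_f$ with in-home path-loss exponent $\beta$, $\Psi_{0k}$ are the interferer gains, $\alpha$ is the inter-femtocell path-loss exponent, and $P$ is the wall penetration loss (entering squared). *)

theory Defs
  imports "HOL-Probability.Probability"
begin

text \<open>A homogeneous Poisson point process on the plane with intensity mu, given by an
  enumeration X omega :: nat => real^2 of its (distinct) points.\<close>

definition point_count :: "(nat \<Rightarrow> real^2) \<Rightarrow> (real^2) set \<Rightarrow> nat" where
  "point_count x B = card {k. x k \<in> B}"

definition poisson_pp :: "'w measure \<Rightarrow> ('w \<Rightarrow> nat \<Rightarrow> real^2) \<Rightarrow> real \<Rightarrow> bool" where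
  "poisson_pp M X mu \<longleftrightarrow>
     prob_space M \<and>
     X \<in> M \<rightarrow>\<^sub>M PiM UNIV (\<lambda>_. borel) \<and>
     (\<forall>w\<in>space M. inj (X w)) \<and>
     (\<forall>(n::nat) (B :: nat \<Rightarrow> (real^2) set).
        (\<forall>i<n. B i \<in> sets lborel \<and> bounded (B i)) \<and> disjoint_family_on B {..<n} \<longrightarrow>
          (\<forall>i<n. AE w in M. finite {k. X w k \<in> B i}) \<and>
          prob_space.indep_vars M (\<lambda>_. count_space UNIV)
             (\<lambda>i w. point_count (X w) (B i)) {..<n} \<and>
          (\<forall>i<n. \<forall>j::nat.
             measure M {w \<in> space M. point_count (X w) (B i) = j}
               = exp (- (mu * measure lborel (B i))) * (mu * measure lborel (B i)) ^ j / fact j))"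

definition indep_rv :: "'w measure \<Rightarrow> 'a measure \<Rightarrow> ('w \<Rightarrow> 'a) \<Rightarrow> 'b measure \<Rightarrow> ('w \<Rightarrow> 'b) \<Rightarrow> bool" where
  "indep_rv M Ma A Mb B \<longleftrightarrow>
     A \<in> M \<rightarrow>\<^sub>M Ma \<and> B \<in> M \<rightarrow>\<^sub>M Mb \<and>
     prob_space.indep_set M
       (sigma_sets (space M) {A -` S \<inter> space M | S. S \<in> sets Ma})
       (sigma_sets (space M) {B -` S \<inter> space M | S. S \<in> sets Mb})"

text \<open>Signal-to-interference ratio (extended nonnegative reals, so that an infinite or zero
  interference is handled by ennreal arithmetic).\<close>

definition SIR :: "real \<Rightarrow> real \<Rightarrow> real \<Rightarrow> real \<Rightarrow> real \<Rightarrow> (nat \<Rightarrow> real^2) \<Rightarrow> (nat \<Rightarrow> real)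
                    \<Rightarrow> ennreal" where
  "SIR alpha beta Rf P psi0 x psi =
     ennreal (psi0 * Rf powr (- beta)) /
     (\<Sum>k. ennreal (P\<^sup>2 * psi k * norm (x k) powr (- alpha)))"

end

theory Submission
  imports Defs
begin

(* Idea: if SIR > Gamma then no single interferer is "dominant", i.e. every point x_k of the
   Poisson process carries a mark Psi_k < U * |x_k|^alpha, where U = Psi0 Rf^(-beta) / (Gamma P^2).
   For fixed U, the dominant points form an independent thinning of the process: a point at
   distance s survives with probability P(PsiI >= U s^alpha), so their mean number is
   mu * E[pi (PsiI/U)^(2/alpha)] and the probability that there is none is
   exp(-mu pi U^(-delta) E[PsiI^delta]).  Averaging over the independent Psi0 gives the theorem. *)

lemma indep_rv_sym:
  assumes "prob_space M" "indep_rv M Ma A Mb B"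
  shows "indep_rv M Mb B Ma A"
proof -
  interpret prob_space M by fact
  have "prob (a \<inter> b) = prob a * prob b" if "prob (b \<inter> a) = prob b * prob a" for a b
    using that by (simp add: Int_commute mult.commute)
  then show ?thesis
    using assms(2) unfolding indep_rv_def indep_sets2_eq by blast
qed

lemma indep_rv_distr:
  assumes "prob_space M" and ind: "indep_rv M Ma A Mb B"
  shows "distr M (Ma \<Otimes>\<^sub>M Mb) (\<lambda>w. (A w, B w)) = distr M Ma A \<Otimes>\<^sub>M distr M Mb B"
proof -
  interpret prob_space M by fact
  have A: "random_variable Ma A" and B: "random_variable Mb B"
    and I: "indep_set (sigma_sets (space M) {A -` S \<inter> space M | S. S \<in> sets Ma})
       (sigma_sets (space M) {B -` S \<inter> space M | S. S \<in> sets Mb})"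
    using ind unfolding indep_rv_def by auto
  interpret DA: prob_space "distr M Ma A" by (rule prob_space_distr) fact
  interpret DB: prob_space "distr M Mb B" by (rule prob_space_distr) fact
  show ?thesis
  proof (rule pair_measure_eqI[symmetric])
    fix S T assume S: "S \<in> sets (distr M Ma A)" and T: "T \<in> sets (distr M Mb B)"
    have "(\<lambda>w. (A w, B w)) -` (S \<times> T) \<inter> space M = (A -` S \<inter> space M) \<inter> (B -` T \<inter> space M)"
      by auto
    moreover have "prob ((A -` S \<inter> space M) \<inter> (B -` T \<inter> space M))
                     = prob (A -` S \<inter> space M) * prob (B -` T \<inter> space M)"
    proof -
      have "A -` S \<inter> space M \<in> sigma_sets (space M) {A -` S \<inter> space M | S. S \<in> sets Ma}"
           "B -` T \<inter> space M \<in> sigma_sets (space M) {B -` S \<inter> space M | S. S \<in> sets Mb}"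
        using S T by (auto intro: sigma_sets.Basic)
      then show ?thesis using I unfolding indep_sets2_eq by blast
    qed
    ultimately show "emeasure (distr M Ma A) S * emeasure (distr M Mb B) T
                     = emeasure (distr M (Ma \<Otimes>\<^sub>M Mb) (\<lambda>w. (A w, B w))) (S \<times> T)"
      using A B S T by (simp add: emeasure_distr emeasure_eq_measure ennreal_mult)
  qed (use A B in \<open>auto intro: DA.sigma_finite_measure_axioms DB.sigma_finite_measure_axioms\<close>)
qed

lemma indep_rv_emeasure_slices:
  assumes M: "prob_space M" and ind: "indep_rv M Ma A Mb B" and T: "T \<in> sets (Ma \<Otimes>\<^sub>M Mb)"
  shows "emeasure M {w \<in> space M. (A w, B w) \<in> T}
           = (\<integral>\<^sup>+w. emeasure M {w' \<in> space M. (A w, B w') \<in> T} \<partial>M)"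
proof -
  interpret prob_space M by fact
  have A[measurable]: "A \<in> M \<rightarrow>\<^sub>M Ma" and B[measurable]: "B \<in> M \<rightarrow>\<^sub>M Mb"
    using ind unfolding indep_rv_def by auto
  interpret DB: prob_space "distr M Mb B" by (rule prob_space_distr) fact
  have T': "T \<in> sets (distr M Ma A \<Otimes>\<^sub>M distr M Mb B)"
    using T by (simp cong: sets_pair_measure_cong)
  have slice: "emeasure (distr M Mb B) (Pair x -` T) = emeasure M {w' \<in> space M. (x, B w') \<in> T}"
    if "x \<in> space Ma" for x
    using sets_Pair1[OF T] by (subst emeasure_distr) (auto intro!: arg_cong[where f="emeasure M"])
  have "emeasure M {w \<in> space M. (A w, B w) \<in> T}
          = emeasure (distr M (Ma \<Otimes>\<^sub>M Mb) (\<lambda>w. (A w, B w))) T"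
    using T by (subst emeasure_distr) (auto intro!: arg_cong[where f="emeasure M"])
  also have "\<dots> = emeasure (distr M Ma A \<Otimes>\<^sub>M distr M Mb B) T"
    by (simp add: indep_rv_distr[OF M ind])
  also have "\<dots> = (\<integral>\<^sup>+x. emeasure (distr M Mb B) (Pair x -` T) \<partial>distr M Ma A)"
    by (rule DB.emeasure_pair_measure_alt[OF T'])
  also have "\<dots> = (\<integral>\<^sup>+w. emeasure (distr M Mb B) (Pair (A w) -` T) \<partial>M)"
    using DB.measurable_emeasure_Pair[OF T'] by (subst nn_integral_distr) auto
  also have "\<dots> = (\<integral>\<^sup>+w. emeasure M {w' \<in> space M. (A w, B w') \<in> T} \<partial>M)"
    using A by (intro nn_integral_cong) (simp add: slice measurable_space[OF A])
  finally show ?thesis .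
qed

lemma indep_rv_prob_le_expectation:
  fixes S :: "'w \<Rightarrow> real" and f :: "real \<Rightarrow> real"
  assumes M: "prob_space M" and ind: "indep_rv M borel S N Z" and T: "T \<in> sets (borel \<Otimes>\<^sub>M N)"
    and S_pos: "AE w in M. S w > 0"
    and f_nonneg: "\<And>v. 0 \<le> f v" and f_int: "integrable M (\<lambda>w. f (S w))"
    and slice_bound: "\<And>v. v > 0 \<Longrightarrow> measure M {w \<in> space M. (v, Z w) \<in> T} \<le> f v"
  shows "measure M {w \<in> space M. (S w, Z w) \<in> T} \<le> prob_space.expectation M (\<lambda>w. f (S w))"
proof -
  interpret prob_space M by fact
  have "emeasure M {w \<in> space M. (S w, Z w) \<in> T}
          = (\<integral>\<^sup>+w. emeasure M {w' \<in> space M. (S w, Z w') \<in> T} \<partial>M)"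
    by (rule indep_rv_emeasure_slices[OF M ind T])
  also have "\<dots> \<le> (\<integral>\<^sup>+w. ennreal (f (S w)) \<partial>M)"
    using S_pos by (intro nn_integral_mono_AE) (auto simp: emeasure_eq_measure slice_bound ennreal_leI)
  also have "\<dots> = ennreal (expectation (\<lambda>w. f (S w)))"
    using f_int f_nonneg by (intro nn_integral_eq_integral) auto
  finally show ?thesis
    using f_nonneg by (simp add: emeasure_eq_measure ennreal_le_iff integral_nonneg_AE)
qed

definition annulus :: "real \<Rightarrow> real \<Rightarrow> (real^2) set" where
  "annulus a b = {x. x \<noteq> 0 \<and> a \<le> norm x \<and> norm x < b}"

lemma annulus_eq_balls: "annulus a b = (ball 0 b - ball 0 a) - {0}"
  by (auto simp: annulus_def)

lemma annulus_sets[measurable]: "annulus a b \<in> sets borel"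
  unfolding annulus_eq_balls by auto

lemma annulus_bounded: "bounded (annulus a b)"
  unfolding annulus_def bounded_iff by (intro exI[of _ b]) auto

lemma annulus_measure:
  assumes "0 \<le> a" "a \<le> b"
  shows "measure lborel (annulus a b) = pi * (b\<^sup>2 - a\<^sup>2)"
proof -
  have disc: "emeasure lborel (ball (0::real^2) r) = ennreal (pi * r\<^sup>2)" if "0 \<le> r" for r
    using emeasure_ball[where c="0::real^2" and r=r] unit_ball_vol_even[of 1] that
    by (simp add: power2_eq_square)
  have "emeasure lborel (annulus a b) = emeasure lborel (ball (0::real^2) b - ball 0 a)"
    unfolding annulus_eq_balls
    by (rule emeasure_Diff_null_set) (auto intro: finite_imp_null_set_lborel)
  also have "\<dots> = emeasure lborel (ball (0::real^2) b) - emeasure lborel (ball (0::real^2) a)"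
    using assms by (intro emeasure_Diff) (auto simp: emeasure_ball)
  also have "\<dots> = ennreal (pi * (b\<^sup>2 - a\<^sup>2))"
    using assms by (simp add: disc ennreal_minus[symmetric] power_mono algebra_simps)
  finally show ?thesis
    unfolding measure_def using assms by (simp add: power_mono)
qed

(* A point of the i-th annulus of width 1/m is recovered from its norm, so these annuli are disjoint. *)
lemma annulus_index:
  assumes "x \<in> annulus (real i / real m) (real (Suc i) / real m)" "m > 0"
  shows "nat \<lfloor>norm x * real m\<rfloor> = i"
proof -
  have "real i \<le> norm x * m" "norm x * m < real i + 1"
    using assms by (auto simp: annulus_def field_simps)
  then have "\<lfloor>norm x * real m\<rfloor> = int i" by (simp add: floor_eq_iff)
  then show ?thesis by simp
qed

lemma annuli_disjoint:
  assumes "m > 0"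
  shows "disjoint_family_on (\<lambda>i. annulus (real i / real m) (real (Suc i) / real m)) I"
  unfolding disjoint_family_on_def using annulus_index[OF _ assms] by blast

(* Area of the disc of radius min r m - 1/m: a lower approximation of pi r^2 that is covered
   by the annuli of width 1/m lying completely inside the disc of radius r. *)
definition inner_disc_area :: "nat \<Rightarrow> real \<Rightarrow> real" where
  "inner_disc_area m r = pi * (max 0 (min r (real m) - 1 / real m))\<^sup>2"

lemma inner_disc_area_le_disc:
  assumes "r \<ge> 0"
  shows "inner_disc_area m r \<le> pi * r\<^sup>2"
proof -
  have "min r (real m) \<le> r" "0 \<le> 1 / real m" by simp_all
  then have "max 0 (min r (real m) - 1 / real m) \<le> r" using assms by linarith
  then show ?thesis unfolding inner_disc_area_def by (intro mult_left_mono power_mono) auto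
qed

lemma inner_disc_area_le_square: "inner_disc_area m r \<le> pi * (real m)\<^sup>2"
proof -
  have "min r (real m) \<le> real m" "0 \<le> 1 / real m" by simp_all
  then have "max 0 (min r (real m) - 1 / real m) \<le> real m" by linarith
  then show ?thesis unfolding inner_disc_area_def by (intro mult_left_mono power_mono) auto
qed

lemma annuli_inner_disc_area:
  fixes m :: nat and r :: real
  assumes m: "m > 0" and r: "r \<ge> 0"
  shows "inner_disc_area m r
           \<le> (\<Sum>i<m\<^sup>2. pi * ((real (Suc i) / m)\<^sup>2 - (real i / m)\<^sup>2) * of_bool (real (Suc i) / m \<le> r))"
    (is "?A \<le> (\<Sum>i<_. ?a i * ?flag i)")
proof -
  have a_nonneg: "0 \<le> ?a i" for i
    by (simp add: power_mono divide_right_mono)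
  define j where "j = nat \<lfloor>min r m * m\<rfloor>"
  have j_le: "j \<le> m\<^sup>2"
  proof -
    have "min r m * m \<le> real m * real m" by (simp add: mult_right_mono)
    then show ?thesis unfolding j_def by (simp add: power2_eq_square floor_le_iff nat_le_iff)
  qed
  have j_bounds: "min r m * m - 1 < real j" "real j \<le> min r m * m"
    unfolding j_def using r by (simp_all add: of_nat_nat)
  have flag: "real (Suc i) / m \<le> r" if "i < j" for i
  proof -
    have "real (Suc i) \<le> r * m"
      using that j_bounds(2) mult_right_mono[of "min r m" r "real m"] by linarith
    then show ?thesis using m by (simp add: divide_le_eq mult.commute)
  qed
  have "?A \<le> pi * (real j / m)\<^sup>2"
  proof -
    have "min r m - 1 / m = (min r m * m - 1) / m" using m by (simp add: field_simps)
    also have "\<dots> \<le> real j / m" using j_bounds m by (intro divide_right_mono) auto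
    finally show ?thesis
      unfolding inner_disc_area_def by (intro mult_left_mono power_mono) auto
  qed
  also have "pi * (real j / m)\<^sup>2 = (\<Sum>i<j. ?a i)"
  proof -
    have "(\<Sum>i<j. (real (Suc i) / m)\<^sup>2 - (real i / m)\<^sup>2) = (real j / m)\<^sup>2"
      by (subst sum_lessThan_telescope[where f="\<lambda>i. (real i / m)\<^sup>2"]) simp
    then show ?thesis by (simp add: sum_distrib_left[symmetric])
  qed
  also have "\<dots> = (\<Sum>i<j. ?a i * ?flag i)"
    using flag by (intro sum.cong) auto
  also have "\<dots> \<le> (\<Sum>i<m\<^sup>2. ?a i * ?flag i)"
    using j_le a_nonneg by (intro sum_mono2) auto
  finally show ?thesis .
qed

lemma inner_disc_area_tendsto:
  fixes r :: real
  assumes "r \<ge> 0"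
  shows "(\<lambda>m. inner_disc_area m r) \<longlonglongrightarrow> pi * r\<^sup>2"
proof -
  obtain N :: nat where N: "r \<le> N" using real_arch_simple by blast
  have "(\<lambda>m. pi * (max 0 (r - 1 / real m))\<^sup>2) \<longlonglongrightarrow> pi * (max 0 (r - 0))\<^sup>2"
    by (intro tendsto_intros lim_inverse_n')
  moreover have "\<forall>\<^sub>F m in sequentially.
      pi * (max 0 (r - 1 / real m))\<^sup>2 = pi * (max 0 (min r (real m) - 1 / real m))\<^sup>2"
    using N by (intro eventually_sequentiallyI[of N]) (auto simp: min_def)
  ultimately show ?thesis
    unfolding inner_disc_area_def using assms by (auto intro: Lim_transform_eventually)
qed

lemma poisson_pgf:
  assumes M: "prob_space M" and N: "N \<in> M \<rightarrow>\<^sub>M count_space UNIV"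
    and law: "\<And>j. measure M {w \<in> space M. N w = j} = exp (- m) * m ^ j / fact j"
    and q: "0 \<le> q"
  shows "(\<integral>\<^sup>+w. ennreal (q ^ N w) \<partial>M) = ennreal (exp (- m * (1 - q)))"
proof -
  interpret prob_space M by fact
  define p where "p j = exp (- m) * m ^ j / fact j" for j
  have p_nonneg: "0 \<le> p j" for j
    unfolding p_def by (metis law measure_nonneg)
  have series: "(\<lambda>j. q ^ j * p j) sums exp (- m * (1 - q))"
  proof -
    have "(\<lambda>j. exp (- m) * ((q * m) ^ j / fact j)) sums (exp (- m) * exp (q * m))"
      using exp_converges[of "q * m"] by (intro sums_mult) (simp add: divide_inverse mult.commute)
    moreover have "exp (- m) * exp (q * m) = exp (- m * (1 - q))"
      by (simp add: exp_add[symmetric] algebra_simps)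
    ultimately show ?thesis
      by (simp add: p_def power_mult_distrib mult_ac)
  qed
  have "(\<integral>\<^sup>+w. ennreal (q ^ N w) \<partial>M)
          = (\<integral>\<^sup>+w. (\<Sum>j. ennreal (q ^ j) * indicator {w \<in> space M. N w = j} w) \<partial>M)"
  proof (rule nn_integral_cong)
    fix w assume "w \<in> space M"
    then have "(\<Sum>j. ennreal (q ^ j) * indicator {w \<in> space M. N w = j} w)
                 = (\<Sum>j\<in>{N w}. ennreal (q ^ j) * indicator {w \<in> space M. N w = j} w)"
      by (intro suminf_finite) (auto simp: indicator_def)
    then show "ennreal (q ^ N w) = (\<Sum>j. ennreal (q ^ j) * indicator {w \<in> space M. N w = j} w)"
      using \<open>w \<in> space M\<close> by simp
  qed
  also have "\<dots> = (\<Sum>j. \<integral>\<^sup>+w. ennreal (q ^ j) * indicator {w \<in> space M. N w = j} w \<partial>M)"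
    using N by (intro nn_integral_suminf) measurable
  also have "\<dots> = (\<Sum>j. ennreal (q ^ j * p j))"
    using N q p_nonneg
    by (intro suminf_cong, subst nn_integral_cmult_indicator)
       (auto simp: emeasure_eq_measure law p_def ennreal_mult[symmetric])
  also have "\<dots> = ennreal (exp (- m * (1 - q)))"
    using series q p_nonneg by (subst suminf_ennreal2) (auto simp: sums_iff)
  finally show ?thesis .
qed

lemma poisson_ppD:
  fixes B :: "nat \<Rightarrow> (real^2) set"
  assumes ppp: "poisson_pp M X mu"
    and B: "\<And>i. i < n \<Longrightarrow> B i \<in> sets lborel \<and> bounded (B i)"
    and disj: "disjoint_family_on B {..<n}"
  shows "(\<forall>i<n. AE w in M. finite {k. X w k \<in> B i}) \<and>
         prob_space.indep_vars M (\<lambda>_. count_space UNIV) (\<lambda>i w. point_count (X w) (B i)) {..<n} \<and>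
         (\<forall>i<n. \<forall>j::nat. measure M {w \<in> space M. point_count (X w) (B i) = j}
               = exp (- (mu * measure lborel (B i))) * (mu * measure lborel (B i)) ^ j / fact j)"
proof -
  have hyp: "(\<forall>i<n. B i \<in> sets lborel \<and> bounded (B i)) \<and> disjoint_family_on B {..<n}"
    using B disj by blast
  have "\<forall>(n::nat) (B :: nat \<Rightarrow> (real^2) set).
        (\<forall>i<n. B i \<in> sets lborel \<and> bounded (B i)) \<and> disjoint_family_on B {..<n} \<longrightarrow>
          (\<forall>i<n. AE w in M. finite {k. X w k \<in> B i}) \<and>
          prob_space.indep_vars M (\<lambda>_. count_space UNIV)
             (\<lambda>i w. point_count (X w) (B i)) {..<n} \<and>
          (\<forall>i<n. \<forall>j::nat.
             measure M {w \<in> space M. point_count (X w) (B i) = j}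
               = exp (- (mu * measure lborel (B i))) * (mu * measure lborel (B i)) ^ j / fact j)"
    using ppp unfolding poisson_pp_def by (elim conjE)
  from this[rule_format, OF hyp] show ?thesis .
qed

lemma poisson_pp_counts_pgf:
  fixes B :: "nat \<Rightarrow> (real^2) set" and q :: "nat \<Rightarrow> real" and n :: nat
  assumes ppp: "poisson_pp M X mu"
    and B: "\<And>i. i < n \<Longrightarrow> B i \<in> sets lborel \<and> bounded (B i)"
    and disj: "disjoint_family_on B {..<n}"
    and q: "\<And>i. 0 \<le> q i"
  shows "(\<integral>\<^sup>+w. (\<Prod>i<n. ennreal (q i ^ point_count (X w) (B i))) \<partial>M)
           = ennreal (exp (- mu * (\<Sum>i<n. measure lborel (B i) * (1 - q i))))"
proof -
  have M: "prob_space M" using ppp by (simp add: poisson_pp_def)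
  interpret prob_space M by fact
  have indep: "indep_vars (\<lambda>_. count_space UNIV) (\<lambda>i w. point_count (X w) (B i)) {..<n}"
    and law: "\<And>i j. i < n \<Longrightarrow> measure M {w \<in> space M. point_count (X w) (B i) = j}
               = exp (- (mu * measure lborel (B i))) * (mu * measure lborel (B i)) ^ j / fact j"
    using poisson_ppD[OF ppp B disj] by auto
  have "(\<integral>\<^sup>+w. (\<Prod>i<n. ennreal (q i ^ point_count (X w) (B i))) \<partial>M)
          = (\<Prod>i<n. \<integral>\<^sup>+w. ennreal (q i ^ point_count (X w) (B i)) \<partial>M)"
    using indep_vars_compose2[OF indep, where Y="\<lambda>i j. ennreal (q i ^ j)" and N="\<lambda>_. borel"]
    by (intro indep_vars_nn_integral) auto
  also have "\<dots> = (\<Prod>i<n. ennreal (exp (- (mu * measure lborel (B i)) * (1 - q i))))"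
  proof (rule prod.cong[OF refl])
    fix i assume "i \<in> {..<n}"
    moreover have "(\<lambda>w. point_count (X w) (B i)) \<in> M \<rightarrow>\<^sub>M count_space UNIV"
      using indep \<open>i \<in> {..<n}\<close> unfolding indep_vars_def by auto
    ultimately show "(\<integral>\<^sup>+w. ennreal (q i ^ point_count (X w) (B i)) \<partial>M)
                       = ennreal (exp (- (mu * measure lborel (B i)) * (1 - q i)))"
      using law q by (intro poisson_pgf[OF M]) auto
  qed
  also have "\<dots> = ennreal (exp (- mu * (\<Sum>i<n. measure lborel (B i) * (1 - q i))))"
    by (simp add: prod_ennreal exp_sum[symmetric] sum_distrib_left sum_negf mult_ac)
  finally show ?thesis .
qed

lemma (in prob_space) prob_ge_eq_1_minus_prob_less:
  fixes f :: "'a \<Rightarrow> real"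
  assumes [measurable]: "f \<in> borel_measurable M"
  shows "prob {w \<in> space M. c \<le> f w} = 1 - prob {w \<in> space M. f w < c}"
proof -
  have "{w \<in> space M. f w < c} \<in> events" by measurable
  moreover have "space M - {w \<in> space M. f w < c} = {w \<in> space M. c \<le> f w}" by auto
  ultimately show ?thesis by (metis prob_compl)
qed

lemma (in prob_space) expectation_of_bool:
  "expectation (\<lambda>w. of_bool (P w)) = prob {w \<in> space M. P w}"
proof -
  have "expectation (\<lambda>w. of_bool (P w)) = expectation (indicator {w \<in> space M. P w})"
    by (intro Bochner_Integration.integral_cong) (auto simp: indicator_def)
  also have "\<dots> = prob ({w \<in> space M. P w} \<inter> space M)"
    by (rule Bochner_Integration.integral_indicator)
  finally show ?thesis by (simp add: Int_absorb2)
qed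

lemma iid_marks_below:
  fixes Psi :: "nat \<Rightarrow> 'w \<Rightarrow> real" and PsiI :: "'w \<Rightarrow> real"
  assumes M: "prob_space M"
    and indep: "prob_space.indep_vars M (\<lambda>_. borel) Psi UNIV"
    and Psi_distr: "\<And>k. distr M borel (Psi k) = distr M borel PsiI"
    and Psi_rv: "\<And>k. Psi k \<in> borel_measurable M"
    and PsiI_rv: "PsiI \<in> borel_measurable M"
    and K: "finite K"
  shows "measure M {w \<in> space M. \<forall>k\<in>K. Psi k w < c k}
           = (\<Prod>k\<in>K. measure M {w \<in> space M. PsiI w < c k})"
proof (cases "K = {}")
  case True
  then show ?thesis using M by (simp add: prob_space.prob_space)
next
  case False
  interpret prob_space M by fact
  have marginal: "prob (Psi k -` {..<c k} \<inter> space M) = prob {w \<in> space M. PsiI w < c k}" for k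
  proof -
    have "prob (Psi k -` {..<c k} \<inter> space M) = measure (distr M borel (Psi k)) {..<c k}"
      using Psi_rv by (simp add: measure_distr)
    also have "\<dots> = measure (distr M borel PsiI) {..<c k}" by (simp add: Psi_distr)
    also have "\<dots> = prob {w \<in> space M. PsiI w < c k}"
      using PsiI_rv by (simp add: measure_distr vimage_def Int_def conj_commute)
    finally show ?thesis .
  qed
  have "{w \<in> space M. \<forall>k\<in>K. Psi k w < c k} = (\<Inter>k\<in>K. Psi k -` {..<c k} \<inter> space M)"
    using False by auto
  moreover have "prob (\<Inter>k\<in>K. Psi k -` {..<c k} \<inter> space M)
                   = (\<Prod>k\<in>K. prob (Psi k -` {..<c k} \<inter> space M))"
  proof -
    have "Psi k -` {..<c k} \<inter> space M \<in> {Psi k -` A \<inter> space M |A. A \<in> sets borel}" for k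
      by (rule CollectI, rule exI[of _ "{..<c k}"]) simp
    then show ?thesis
      using indep K False unfolding indep_vars_def2 by (intro indep_setsD[where I=UNIV]) auto
  qed
  ultimately show ?thesis by (simp add: marginal)
qed

lemma iid_marks_below_on_disjoint_sets:
  fixes Psi :: "nat \<Rightarrow> 'w \<Rightarrow> real" and PsiI :: "'w \<Rightarrow> real"
    and x :: "nat \<Rightarrow> 'a" and B :: "nat \<Rightarrow> 'a set" and c :: "nat \<Rightarrow> real" and n :: nat
  assumes M: "prob_space M"
    and indep: "prob_space.indep_vars M (\<lambda>_. borel) Psi UNIV"
    and Psi_distr: "\<And>k. distr M borel (Psi k) = distr M borel PsiI"
    and Psi_rv: "\<And>k. Psi k \<in> borel_measurable M"
    and PsiI_rv: "PsiI \<in> borel_measurable M"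
    and disj: "disjoint_family_on B {..<n}"
    and fin: "\<And>i. i < n \<Longrightarrow> finite {k. x k \<in> B i}"
  shows "measure M {w \<in> space M. \<forall>i<n. \<forall>k. x k \<in> B i \<longrightarrow> Psi k w < c i}
           = (\<Prod>i<n. measure M {w \<in> space M. PsiI w < c i} ^ card {k. x k \<in> B i})"
proof -
  define K where "K i = {k. x k \<in> B i}" for i
  define cell where "cell k = (THE i. i < n \<and> x k \<in> B i)" for k
  have cell: "cell k = i" if "i < n" "k \<in> K i" for i k
    unfolding cell_def
    using that disj by (intro the_equality) (auto simp: K_def disjoint_family_on_def)
  have "{w \<in> space M. \<forall>i<n. \<forall>k. x k \<in> B i \<longrightarrow> Psi k w < c i}
          = {w \<in> space M. \<forall>k\<in>(\<Union>i<n. K i). Psi k w < c (cell k)}"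
    using cell by (auto simp: K_def)
  also have "measure M \<dots> = (\<Prod>k\<in>(\<Union>i<n. K i). measure M {w \<in> space M. PsiI w < c (cell k)})"
    using fin by (intro iid_marks_below[OF M indep Psi_distr Psi_rv PsiI_rv]) (auto simp: K_def)
  also have "\<dots> = (\<Prod>i<n. \<Prod>k\<in>K i. measure M {w \<in> space M. PsiI w < c (cell k)})"
    using fin cell by (intro prod.UNION_disjoint) (auto simp: K_def, metis)
  also have "\<dots> = (\<Prod>i<n. measure M {w \<in> space M. PsiI w < c i} ^ card (K i))"
    using cell by (intro prod.cong) auto
  finally show ?thesis by (simp add: K_def)
qed

definition dominance_radius :: "real \<Rightarrow> real \<Rightarrow> real \<Rightarrow> real" where
  "dominance_radius u alpha y = (max y 0 / u) powr (1 / alpha)"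

lemma le_dominance_radius_iff:
  assumes u: "u > 0" and alpha: "alpha > 0" and s: "s > 0"
  shows "s \<le> dominance_radius u alpha y \<longleftrightarrow> u * s powr alpha \<le> y"
proof (cases "y > 0")
  case True
  have "s \<le> (y / u) powr (1 / alpha) \<longleftrightarrow> s powr alpha \<le> ((y / u) powr (1 / alpha)) powr alpha"
    using alpha s True u powr_mono2[of alpha s] powr_less_mono2[of alpha _ s]
    by (meson le_less_linear less_imp_le not_le powr_ge_zero)
  also have "\<dots> \<longleftrightarrow> u * s powr alpha \<le> y"
    using True u alpha by (simp add: powr_powr field_simps)
  finally show ?thesis using True by (simp add: dominance_radius_def)
next
  case False
  moreover have "0 < u * s powr alpha" using u s by simp
  ultimately show ?thesis using s by (simp add: dominance_radius_def max_def)
qed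

lemma dominance_radius_nonneg: "0 \<le> dominance_radius u alpha y"
  by (simp add: dominance_radius_def)

lemma dominance_disc_area:
  assumes u: "u > 0" and alpha: "alpha > 0" and y: "y > 0"
  shows "pi * (dominance_radius u alpha y)\<^sup>2 = pi * u powr (- (2 / alpha)) * y powr (2 / alpha)"
proof -
  have "(dominance_radius u alpha y)\<^sup>2 = (y / u) powr (2 / alpha)"
    using y by (simp add: dominance_radius_def power2_eq_square powr_add[symmetric])
  also have "\<dots> = u powr (- (2 / alpha)) * y powr (2 / alpha)"
    using y u by (simp add: powr_divide powr_minus_divide)
  finally show ?thesis by simp
qed

lemma expected_inner_disc_area_tendsto:
  fixes Y :: "'w \<Rightarrow> real"
  assumes Y_rv: "Y \<in> borel_measurable M" and Y_pos: "AE w in M. Y w > 0"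
    and Y_mom: "integrable M (\<lambda>w. Y w powr (2 / alpha))"
    and u: "u > 0" and alpha: "alpha > 0"
  shows "(\<lambda>m. \<integral>w. inner_disc_area m (dominance_radius u alpha (Y w)) \<partial>M)
           \<longlonglongrightarrow> pi * u powr (- (2 / alpha)) * (\<integral>w. Y w powr (2 / alpha) \<partial>M)"
proof -
  define area where "area w = pi * u powr (- (2 / alpha)) * Y w powr (2 / alpha)" for w
  have area_AE: "AE w in M. pi * (dominance_radius u alpha (Y w))\<^sup>2 = area w"
    using Y_pos by eventually_elim (simp add: area_def dominance_disc_area[OF u alpha])
  have "(\<lambda>m. \<integral>w. inner_disc_area m (dominance_radius u alpha (Y w)) \<partial>M) \<longlonglongrightarrow> (\<integral>w. area w \<partial>M)"
  proof (rule integral_dominated_convergence[where w=area])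
    show "integrable M area"
      unfolding area_def using Y_mom by (rule integrable_mult_right)
    show "(\<lambda>w. inner_disc_area m (dominance_radius u alpha (Y w))) \<in> borel_measurable M" for m
      unfolding inner_disc_area_def dominance_radius_def using Y_rv by measurable
    show "AE w in M. (\<lambda>m. inner_disc_area m (dominance_radius u alpha (Y w))) \<longlonglongrightarrow> area w"
      using area_AE by eventually_elim (metis inner_disc_area_tendsto dominance_radius_nonneg)
    show "AE w in M. norm (inner_disc_area m (dominance_radius u alpha (Y w))) \<le> area w" for m
      using area_AE
    proof eventually_elim
      case (elim w)
      then show ?case
        using inner_disc_area_le_disc[OF dominance_radius_nonneg, of m u alpha "Y w"]
        by (simp add: inner_disc_area_def)
    qed
    show "area \<in> borel_measurable M"
      unfolding area_def using Y_rv by measurable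
  qed
  then show ?thesis using Y_mom by (simp add: area_def)
qed

lemma SIR_le_if_dominant_interferer:
  fixes x :: "nat \<Rightarrow> real^2" and psi :: "nat \<Rightarrow> real"
  assumes Gamma: "\<Gamma> > 0" and P: "P > 0" and x: "x k \<noteq> 0"
    and dominant: "psi0 * Rf powr (- beta) / (\<Gamma> * P\<^sup>2) * norm (x k) powr alpha \<le> psi k"
  shows "SIR alpha beta Rf P psi0 x psi \<le> ennreal \<Gamma>"
proof -
  define a where "a = psi0 * Rf powr (- beta)"
  define t where "t = P\<^sup>2 * psi k * norm (x k) powr (- alpha)"
  define S where "S = (\<Sum>k. ennreal (P\<^sup>2 * psi k * norm (x k) powr (- alpha)))"
  have "a / (\<Gamma> * P\<^sup>2) * norm (x k) powr alpha * norm (x k) powr (- alpha) \<le> psi k * norm (x k) powr (- alpha)"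
    using dominant unfolding a_def by (rule mult_right_mono) simp
  moreover have "norm (x k) powr alpha * norm (x k) powr (- alpha) = 1"
    using x by (simp add: powr_add[symmetric])
  ultimately have "a / (\<Gamma> * P\<^sup>2) \<le> psi k * norm (x k) powr (- alpha)"
    by (simp add: mult.assoc)
  then have a_le: "a \<le> \<Gamma> * t"
    using Gamma P unfolding t_def by (simp add: field_simps)
  have t_le: "ennreal t \<le> S"
    using sum_le_suminf[OF summableI, of "{k}" "\<lambda>k. ennreal (P\<^sup>2 * psi k * norm (x k) powr (- alpha))"]
    unfolding S_def t_def by simp
  show ?thesis
  proof (cases "a > 0")
    case True
    then have "t > 0" using a_le Gamma by (metis less_le_trans zero_less_mult_pos)
    then have "S > 0" using t_le by (metis ennreal_less_zero_iff order_less_le_trans)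
    moreover have "ennreal a \<le> S * ennreal \<Gamma>"
    proof -
      have "ennreal a \<le> ennreal t * ennreal \<Gamma>"
        using a_le Gamma \<open>t > 0\<close> by (simp add: ennreal_mult[symmetric] mult.commute)
      also have "\<dots> \<le> S * ennreal \<Gamma>" using t_le by (rule mult_right_mono) simp
      finally show ?thesis .
    qed
    ultimately show ?thesis
      unfolding SIR_def a_def[symmetric] S_def[symmetric] by (rule divide_le_posI_ennreal)
  next
    case False
    then have "ennreal a = 0" by (simp add: ennreal_eq_0_iff)
    then show ?thesis by (simp add: SIR_def a_def[symmetric])
  qed
qed

lemma dominance_threshold_powr:
  fixes v Rf P \<Gamma> beta d :: real
  assumes v: "v > 0" and Rf: "Rf > 0" and P: "P > 0" and Gamma: "\<Gamma> > 0"
  shows "(v * Rf powr (- beta) / (\<Gamma> * P\<^sup>2)) powr (- d)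
           = (\<Gamma> * (P\<^sup>2 * Rf powr beta)) powr d * v powr (- d)"
proof -
  have "v * Rf powr (- beta) / (\<Gamma> * P\<^sup>2) = v / (\<Gamma> * (P\<^sup>2 * Rf powr beta))"
    using Rf by (simp add: powr_minus field_simps)
  also have "\<dots> powr (- d) = (\<Gamma> * (P\<^sup>2 * Rf powr beta)) powr d / v powr d"
    using v Rf P Gamma by (simp add: powr_minus powr_divide)
  finally show ?thesis by (simp add: powr_minus divide_inverse)
qed

locale iid_marked_ppp =
  fixes M :: "'w measure" and X :: "'w \<Rightarrow> nat \<Rightarrow> real^2" and mu :: real
    and Psi :: "nat \<Rightarrow> 'w \<Rightarrow> real" and PsiI :: "'w \<Rightarrow> real"
  assumes ppp: "poisson_pp M X mu" and mu_pos: "mu > 0"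
    and PsiI_rv: "PsiI \<in> borel_measurable M"
    and PsiI_pos: "AE w in M. PsiI w > 0"
    and Psi_rv: "\<And>k. Psi k \<in> borel_measurable M"
    and Psi_distr: "\<And>k. distr M borel (Psi k) = distr M borel PsiI"
    and Psi_indep: "prob_space.indep_vars M (\<lambda>_. borel) Psi UNIV"
    and X_Psi_indep: "indep_rv M (PiM UNIV (\<lambda>_. borel)) X (PiM UNIV (\<lambda>_. borel)) (\<lambda>w k. Psi k w)"
begin

sublocale prob_space M
  using ppp by (simp add: poisson_pp_def)

lemma X_measurable[measurable]: "X \<in> M \<rightarrow>\<^sub>M PiM UNIV (\<lambda>_. borel)"
  using ppp by (simp add: poisson_pp_def)

lemma marks_measurable[measurable]: "(\<lambda>w k. Psi k w) \<in> M \<rightarrow>\<^sub>M PiM UNIV (\<lambda>_. borel)"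
  using Psi_rv by (intro measurable_PiM_single') auto

definition no_dominant_point :: "real \<Rightarrow> real \<Rightarrow> 'w set" where
  "no_dominant_point alpha u =
     {w \<in> space M. \<forall>k. X w k \<noteq> 0 \<longrightarrow> Psi k w < u * norm (X w k) powr alpha}"

(* Proof: condition on the configuration (independence of points and marks), evaluate the mark
   probability as a product of powers, and take the expectation with the probability generating
   functions of the independent Poisson counts. *)
lemma thinned_void_emeasure:
  fixes B :: "nat \<Rightarrow> (real^2) set" and c :: "nat \<Rightarrow> real" and n :: nat
  assumes B_sets[measurable]: "\<And>i. B i \<in> sets borel"
    and B_bounded: "\<And>i. bounded (B i)"
    and disj: "disjoint_family_on B {..<n}"
  shows "emeasure M {w \<in> space M. \<forall>i<n. \<forall>k. X w k \<in> B i \<longrightarrow> Psi k w < c i}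
           = ennreal (exp (- mu * (\<Sum>i<n. measure lborel (B i) * prob {w \<in> space M. c i \<le> PsiI w})))"
proof -
  define q where "q i = prob {w \<in> space M. PsiI w < c i}" for i
  define T :: "((nat \<Rightarrow> real^2) \<times> (nat \<Rightarrow> real)) set"
    where "T = {p \<in> space (PiM UNIV (\<lambda>_. borel) \<Otimes>\<^sub>M PiM UNIV (\<lambda>_. borel)).
                    \<forall>i<n. \<forall>k. fst p k \<in> B i \<longrightarrow> snd p k < c i}"
  have B_ppp: "\<And>i. i < n \<Longrightarrow> B i \<in> sets lborel \<and> bounded (B i)"
    using B_bounded by simp
  have "\<forall>i<n. AE w in M. finite {k. X w k \<in> B i}"
    using poisson_ppD[OF ppp B_ppp disj] by blast
  then have fin: "AE w in M. \<forall>i\<in>{..<n}. finite {k. X w k \<in> B i}"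
    by (intro eventually_ball_finite) auto
  have T_sets: "T \<in> sets (PiM UNIV (\<lambda>_. borel) \<Otimes>\<^sub>M PiM UNIV (\<lambda>_. borel))"
    unfolding T_def by measurable
  have T_event: "{w' \<in> space M. (x, \<lambda>k. Psi k w') \<in> T}
                   = {w' \<in> space M. \<forall>i<n. \<forall>k. x k \<in> B i \<longrightarrow> Psi k w' < c i}" for x
    by (auto simp: T_def space_pair_measure space_PiM PiE_UNIV_domain)
  have "emeasure M {w \<in> space M. \<forall>i<n. \<forall>k. X w k \<in> B i \<longrightarrow> Psi k w < c i}
          = (\<integral>\<^sup>+w. emeasure M {w' \<in> space M. (X w, \<lambda>k. Psi k w') \<in> T} \<partial>M)"
  proof -
    have "{w \<in> space M. \<forall>i<n. \<forall>k. X w k \<in> B i \<longrightarrow> Psi k w < c i}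
            = {w \<in> space M. (X w, \<lambda>k. Psi k w) \<in> T}"
      by (auto simp: T_def space_pair_measure space_PiM PiE_UNIV_domain)
    then show ?thesis
      using indep_rv_emeasure_slices[OF prob_space_axioms X_Psi_indep T_sets] by simp
  qed
  also have "\<dots> = (\<integral>\<^sup>+w. (\<Prod>i<n. ennreal (q i ^ point_count (X w) (B i))) \<partial>M)"
    using fin
  proof (intro nn_integral_cong_AE, eventually_elim)
    case (elim w)
    have "measure M {w' \<in> space M. \<forall>i<n. \<forall>k. X w k \<in> B i \<longrightarrow> Psi k w' < c i}
            = (\<Prod>i<n. q i ^ point_count (X w) (B i))"
      unfolding q_def point_count_def using elim
      by (intro iid_marks_below_on_disjoint_sets[OF prob_space_axioms Psi_indep Psi_distr Psi_rv
            PsiI_rv disj]) auto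
    then show ?case
      by (simp add: T_event emeasure_eq_measure q_def prod_ennreal)
  qed
  also have "\<dots> = ennreal (exp (- mu * (\<Sum>i<n. measure lborel (B i) * (1 - q i))))"
  proof (rule poisson_pp_counts_pgf[OF ppp B_ppp disj])
    show "0 \<le> q i" for i by (simp add: q_def)
  qed
  also have "\<dots> = ennreal (exp (- mu * (\<Sum>i<n. measure lborel (B i) * prob {w \<in> space M. c i \<le> PsiI w})))"
    by (simp add: q_def prob_ge_eq_1_minus_prob_less[OF PsiI_rv])
  finally show ?thesis .
qed

(* Discretisation: restricting attention to the m^2 annuli of width 1/m inside the disc of
   radius m, a point in the i-th annulus that is not dominant has mark below u ((i+1)/m)^alpha. *)
lemma no_dominant_point_annuli_bound:
  fixes m :: nat
  assumes alpha: "alpha > 0" and u: "u > 0" and m: "m > 0"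
  shows "emeasure M (no_dominant_point alpha u)
    \<le> ennreal (exp (- mu * (\<Sum>i<m\<^sup>2. measure lborel (annulus (real i / m) (real (Suc i) / m))
                               * prob {w \<in> space M. u * (real (Suc i) / m) powr alpha \<le> PsiI w})))"
proof -
  define B where "B i = annulus (real i / m) (real (Suc i) / m)" for i
  define c where "c i = u * (real (Suc i) / m) powr alpha" for i
  have "no_dominant_point alpha u \<subseteq> {w \<in> space M. \<forall>i<m\<^sup>2. \<forall>k. X w k \<in> B i \<longrightarrow> Psi k w < c i}"
  proof (safe)
    fix w i k assume w: "w \<in> no_dominant_point alpha u" and "X w k \<in> B i"
    then have "X w k \<noteq> 0" and k_near: "norm (X w k) < real (Suc i) / m"
      by (auto simp: B_def annulus_def)
    then have "Psi k w < u * norm (X w k) powr alpha"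
      using w by (auto simp: no_dominant_point_def)
    also have "\<dots> \<le> c i"
      unfolding c_def using u alpha k_near by (intro mult_left_mono powr_mono2) auto
    finally show "Psi k w < c i" .
  qed (simp add: no_dominant_point_def)
  then have "emeasure M (no_dominant_point alpha u)
               \<le> emeasure M {w \<in> space M. \<forall>i<m\<^sup>2. \<forall>k. X w k \<in> B i \<longrightarrow> Psi k w < c i}"
    unfolding B_def by (intro emeasure_mono) measurable
  also have "\<dots> = ennreal (exp (- mu * (\<Sum>i<m\<^sup>2. measure lborel (B i) * prob {w \<in> space M. c i \<le> PsiI w})))"
    unfolding B_def using annuli_disjoint[OF m] by (intro thinned_void_emeasure annulus_bounded) simp
  finally show ?thesis by (simp add: B_def c_def)
qed

lemma expected_inner_disc_area_le_annuli_sum: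
  fixes m :: nat
  assumes alpha: "alpha > 0" and u: "u > 0" and m: "m > 0"
  shows "expectation (\<lambda>w. inner_disc_area m (dominance_radius u alpha (PsiI w)))
    \<le> (\<Sum>i<m\<^sup>2. measure lborel (annulus (real i / m) (real (Suc i) / m))
                  * prob {w \<in> space M. u * (real (Suc i) / m) powr alpha \<le> PsiI w})"
proof -
  define a where "a i = pi * ((real (Suc i) / m)\<^sup>2 - (real i / m)\<^sup>2)" for i
  define c where "c i = u * (real (Suc i) / m) powr alpha" for i
  have flag_int: "integrable M (\<lambda>w. a i * of_bool (c i \<le> PsiI w))" for i
    using PsiI_rv by (intro integrable_mult_right integrable_const_bound[where B=1]) auto
  have area: "measure lborel (annulus (real i / m) (real (Suc i) / m)) = a i" for i
    unfolding a_def by (rule annulus_measure) (auto intro: divide_right_mono)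
  have "expectation (\<lambda>w. inner_disc_area m (dominance_radius u alpha (PsiI w)))
          \<le> expectation (\<lambda>w. \<Sum>i<m\<^sup>2. a i * of_bool (c i \<le> PsiI w))"
  proof (rule integral_mono)
    show "integrable M (\<lambda>w. inner_disc_area m (dominance_radius u alpha (PsiI w)))"
    proof (rule integrable_const_bound[where B="pi * (real m)\<^sup>2"])
      show "AE w in M. norm (inner_disc_area m (dominance_radius u alpha (PsiI w))) \<le> pi * (real m)\<^sup>2"
        using inner_disc_area_le_square by (simp add: inner_disc_area_def)
    qed (unfold inner_disc_area_def dominance_radius_def, use PsiI_rv in measurable)
    show "integrable M (\<lambda>w. \<Sum>i<m\<^sup>2. a i * of_bool (c i \<le> PsiI w))"
      using flag_int by (rule Bochner_Integration.integrable_sum)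
    show "inner_disc_area m (dominance_radius u alpha (PsiI w))
            \<le> (\<Sum>i<m\<^sup>2. a i * of_bool (c i \<le> PsiI w))" for w
    proof -
      have "inner_disc_area m (dominance_radius u alpha (PsiI w))
              \<le> (\<Sum>i<m\<^sup>2. a i * of_bool (real (Suc i) / m \<le> dominance_radius u alpha (PsiI w)))"
        unfolding a_def by (rule annuli_inner_disc_area[OF m dominance_radius_nonneg])
      also have "\<dots> = (\<Sum>i<m\<^sup>2. a i * of_bool (c i \<le> PsiI w))"
        unfolding c_def using m by (simp add: le_dominance_radius_iff[OF u alpha])
      finally show ?thesis .
    qed
  qed
  also have "\<dots> = (\<Sum>i<m\<^sup>2. expectation (\<lambda>w. a i * of_bool (c i \<le> PsiI w)))"
    using flag_int by (rule Bochner_Integration.integral_sum)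
  also have "\<dots> = (\<Sum>i<m\<^sup>2. a i * prob {w \<in> space M. c i \<le> PsiI w})"
    by (intro sum.cong refl, subst integral_mult_right_zero) (rule arg_cong[OF expectation_of_bool])
  finally show ?thesis unfolding area c_def .
qed

lemma no_dominant_point_prob:
  assumes alpha: "alpha > 0" and u: "u > 0"
    and PsiI_mom: "integrable M (\<lambda>w. PsiI w powr (2 / alpha))"
  shows "prob (no_dominant_point alpha u)
           \<le> exp (- mu * (pi * u powr (- (2 / alpha)) * expectation (\<lambda>w. PsiI w powr (2 / alpha))))"
proof (rule LIMSEQ_le_const)
  show "(\<lambda>m. exp (- mu * expectation (\<lambda>w. inner_disc_area m (dominance_radius u alpha (PsiI w)))))
          \<longlonglongrightarrow> exp (- mu * (pi * u powr (- (2 / alpha)) * expectation (\<lambda>w. PsiI w powr (2 / alpha))))"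
    by (intro tendsto_intros expected_inner_disc_area_tendsto[OF PsiI_rv PsiI_pos PsiI_mom u alpha])
  have "prob (no_dominant_point alpha u)
          \<le> exp (- mu * expectation (\<lambda>w. inner_disc_area m (dominance_radius u alpha (PsiI w))))"
    if m: "m \<ge> 1" for m :: nat
  proof -
    let ?S = "\<Sum>i<m\<^sup>2. measure lborel (annulus (real i / m) (real (Suc i) / m))
                  * prob {w \<in> space M. u * (real (Suc i) / m) powr alpha \<le> PsiI w}"
    have "prob (no_dominant_point alpha u) \<le> exp (- mu * ?S)"
      using no_dominant_point_annuli_bound[OF alpha u, of m] m
      by (simp add: emeasure_eq_measure ennreal_le_iff)
    also have "\<dots> \<le> exp (- mu * expectation (\<lambda>w. inner_disc_area m (dominance_radius u alpha (PsiI w))))"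
      using expected_inner_disc_area_le_annuli_sum[OF alpha u, of m] m mu_pos by simp
    finally show ?thesis .
  qed
  then show "\<exists>N. \<forall>m\<ge>N. prob (no_dominant_point alpha u)
      \<le> exp (- mu * expectation (\<lambda>w. inner_disc_area m (dominance_radius u alpha (PsiI w))))"
    by blast
qed

(* The bound of no_dominant_point_prob for the dominance threshold induced by the SIR event:
   the k-th interferer alone pushes SIR below Gamma iff its mark exceeds U v * |x_k|^alpha with
   U v = v Rf^(-beta) / (Gamma P^2), where v is the desired signal's fading gain. *)
lemma no_dominant_point_prob_SIR_threshold:
  assumes alpha: "alpha > 0" and Rf: "Rf > 0" and P: "P > 0" and Gamma: "\<Gamma> > 0" and v: "v > 0"
    and PsiI_mom: "integrable M (\<lambda>w. PsiI w powr (2 / alpha))"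
  shows "prob (no_dominant_point alpha (v * Rf powr (- beta) / (\<Gamma> * P\<^sup>2)))
           \<le> exp (- mu * (pi * expectation (\<lambda>w. PsiI w powr (2 / alpha))
                          * (\<Gamma> * (P\<^sup>2 * Rf powr beta)) powr (2 / alpha)) * v powr (- (2 / alpha)))"
proof -
  have "v * Rf powr (- beta) / (\<Gamma> * P\<^sup>2) > 0" using v Rf P Gamma by simp
  from no_dominant_point_prob[OF alpha this PsiI_mom]
  show ?thesis
    using dominance_threshold_powr[OF v Rf P Gamma, of beta "2 / alpha"] by (simp add: mult_ac)
qed

(* An outage (SIR > Gamma) forces every interferer to be non-dominant for the threshold U(Psi0);
   conditioning on Psi0 reduces the claim to no_dominant_point_prob_SIR_threshold. *)
theorem SIR_coverage_bound:
  fixes Psi0 :: "'w \<Rightarrow> real"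
  assumes alpha: "alpha > 0" and Rf: "Rf > 0" and P: "P > 0" and Gamma: "\<Gamma> > 0"
    and PsiI_mom: "integrable M (\<lambda>w. PsiI w powr (2 / alpha))"
    and Psi0_rv[measurable]: "Psi0 \<in> borel_measurable M"
    and Psi0_pos: "AE w in M. Psi0 w > 0"
    and Psi0_indep: "indep_rv M (PiM UNIV (\<lambda>_. borel) \<Otimes>\<^sub>M PiM UNIV (\<lambda>_. borel))
                        (\<lambda>w. (X w, (\<lambda>k. Psi k w))) borel Psi0"
  shows "prob {w \<in> space M. SIR alpha beta Rf P (Psi0 w) (X w) (\<lambda>k. Psi k w) \<le> ennreal \<Gamma>}
           \<ge> 1 - expectation (\<lambda>w. exp (- mu * (pi * expectation (\<lambda>w. PsiI w powr (2 / alpha))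
                          * (\<Gamma> * (P\<^sup>2 * Rf powr beta)) powr (2 / alpha)) * Psi0 w powr (- (2 / alpha))))"
    (is "prob ?coverage \<ge> 1 - expectation (\<lambda>w. ?f (Psi0 w))")
proof -
  define U where "U v = v * Rf powr (- beta) / (\<Gamma> * P\<^sup>2)" for v
  define T :: "(real \<times> (nat \<Rightarrow> real^2) \<times> (nat \<Rightarrow> real)) set"
    where "T = {p \<in> space (borel \<Otimes>\<^sub>M (PiM UNIV (\<lambda>_. borel) \<Otimes>\<^sub>M PiM UNIV (\<lambda>_. borel))).
                 \<forall>k. fst (snd p) k \<noteq> 0 \<longrightarrow> snd (snd p) k < U (fst p) * norm (fst (snd p) k) powr alpha}"
  have T_sets[measurable]: "T \<in> sets (borel \<Otimes>\<^sub>M (PiM UNIV (\<lambda>_. borel) \<Otimes>\<^sub>M PiM UNIV (\<lambda>_. borel)))"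
    unfolding T_def U_def by measurable
  have T_event: "{w \<in> space M. (v, X w, \<lambda>k. Psi k w) \<in> T} = no_dominant_point alpha (U v)" for v
    by (auto simp: T_def no_dominant_point_def space_pair_measure space_PiM PiE_UNIV_domain)
  have coverage_event: "?coverage \<in> events"
    unfolding SIR_def by measurable
  have outage_sub: "space M - ?coverage \<subseteq> {w \<in> space M. (Psi0 w, X w, \<lambda>k. Psi k w) \<in> T}"
  proof
    fix w assume w: "w \<in> space M - ?coverage"
    have "Psi k w < U (Psi0 w) * norm (X w k) powr alpha" if "X w k \<noteq> 0" for k
      using w that SIR_le_if_dominant_interferer[OF Gamma P, of "X w" k] by (force simp: U_def not_less)
    then show "w \<in> {w \<in> space M. (Psi0 w, X w, \<lambda>k. Psi k w) \<in> T}"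
      using w by (simp add: T_def space_pair_measure space_PiM PiE_UNIV_domain)
  qed
  have "prob (space M - ?coverage) \<le> prob {w \<in> space M. (Psi0 w, X w, \<lambda>k. Psi k w) \<in> T}"
    using outage_sub by (intro finite_measure_mono) measurable
  also have "\<dots> \<le> expectation (\<lambda>w. ?f (Psi0 w))"
  proof (rule indep_rv_prob_le_expectation[OF prob_space_axioms indep_rv_sym[OF prob_space_axioms Psi0_indep]
          T_sets Psi0_pos])
    have "0 \<le> expectation (\<lambda>w. PsiI w powr (2 / alpha))" by (rule integral_nonneg_AE) simp
    then show "integrable M (\<lambda>w. ?f (Psi0 w))"
      using mu_pos by (intro integrable_const_bound[where B=1]) (auto simp: mult_nonneg_nonneg)
    show "measure M {w \<in> space M. (v, X w, \<lambda>k. Psi k w) \<in> T} \<le> ?f v" if "v > 0" for v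
      unfolding T_event U_def by (rule no_dominant_point_prob_SIR_threshold[OF alpha Rf P Gamma that PsiI_mom])
  qed simp
  finally show ?thesis using prob_compl[OF coverage_event] by simp
qed

end

theorem mainTheorem3:
  fixes M :: "'w measure"
    and X :: "'w \<Rightarrow> nat \<Rightarrow> real^2"
    and Psi :: "nat \<Rightarrow> 'w \<Rightarrow> real"
    and PsiI Psi0 :: "'w \<Rightarrow> real"
    and lam rho alpha beta Rf P \<Gamma> :: real
  defines "\<delta> \<equiv> 2 / alpha"
  defines "\<kappa> \<equiv> pi * lam * prob_space.expectation M (\<lambda>w. PsiI w powr \<delta>)
                   * (P\<^sup>2 * Rf powr beta) powr \<delta>"
  assumes M: "prob_space M"
    and int_pos: "lam * rho > 0"
    and ppp: "poisson_pp M X (lam * rho)"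
    and PsiI_rv: "PsiI \<in> borel_measurable M"
    and PsiI_pos: "AE w in M. PsiI w > 0"
    and PsiI_mom: "integrable M (\<lambda>w. PsiI w powr \<delta>)"
    and Psi_rv: "\<And>k. Psi k \<in> borel_measurable M"
    and Psi_distr: "\<And>k. distr M borel (Psi k) = distr M borel PsiI"
    and Psi_indep: "prob_space.indep_vars M (\<lambda>_. borel) Psi UNIV"
    and X_Psi_indep: "indep_rv M (PiM UNIV (\<lambda>_. borel)) X
                        (PiM UNIV (\<lambda>_. borel)) (\<lambda>w k. Psi k w)"
    and Psi0_rv: "Psi0 \<in> borel_measurable M"
    and Psi0_pos: "AE w in M. Psi0 w > 0"
    and Psi0_indep: "indep_rv M
                        (PiM UNIV (\<lambda>_. borel) \<Otimes>\<^sub>M PiM UNIV (\<lambda>_. borel)) (\<lambda>w. (X w, (\<lambda>k. Psi k w)))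
                        borel Psi0"
    and alpha: "alpha > 2" and beta: "beta > 0" and Rf: "Rf > 0" and P: "P > 0"
    and Gamma: "\<Gamma> > 0"
  shows "measure M {w \<in> space M. SIR alpha beta Rf P (Psi0 w) (X w) (\<lambda>k. Psi k w) \<le> ennreal \<Gamma>}
           \<ge> 1 - prob_space.expectation M
                   (\<lambda>w. exp (- rho * \<kappa> * \<Gamma> powr \<delta> * Psi0 w powr (- \<delta>)))"
proof -
  interpret iid_marked_ppp M X "lam * rho" Psi PsiI
    by unfold_locales (fact ppp int_pos PsiI_rv PsiI_pos Psi_rv Psi_distr Psi_indep X_Psi_indep)+
  have rate: "- (lam * rho) * (pi * expectation (\<lambda>w. PsiI w powr \<delta>)
                * (\<Gamma> * (P\<^sup>2 * Rf powr beta)) powr \<delta>) * v powr (- \<delta>)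
              = - rho * \<kappa> * \<Gamma> powr \<delta> * v powr (- \<delta>)" for v
    using Gamma P Rf by (simp add: \<kappa>_def powr_mult mult_ac)
  have "alpha > 0" using alpha by simp
  from SIR_coverage_bound[OF this Rf P Gamma PsiI_mom[unfolded \<delta>_def] Psi0_rv Psi0_pos Psi0_indep,
      where beta=beta]
  show ?thesis
    unfolding \<delta>_def[symmetric] rate .
qed

end
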